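(* Let $a>1$. Then, as $t\to-\infty$, $$f(t,a)\sim\left(-\frac{\pi t}{2}\right)^{1/2}a^{-t}\,\mathrm{erfi}\!\left[-(1+\ln a)\sqrt{-t/2}\right]\exp\!\left(\frac{t(1+\ln a)^{2}}{2}\right),$$ where $f(t,a)=t\int_0^1(ax)^{-tx}\,dx$. In particular $|f(t,a)|$ grows exponentially as $t\to-\infty$.
   Context: For real $a>0$ and real $t$, $f(t,a)=t\int_0^1 (ax)^{-tx}\,dx$, where $(ax)^{-tx}=\exp(-tx\ln(ax))$ for $x\in(0,1]$. $\mathrm{erfi}(x)=\frac{2}{\sqrt\pi}\int_0^x e^{z^2}\,dz$ is the imaginary error function. The notation $g\sim h$ means $g/h\to1$. *)

theory Defs
  imports "HOL-Analysis.Analysis" "HOL-Library.Landau_Symbols"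
begin

definition erfi :: "real \<Rightarrow> real" where
  "erfi x = 2 / sqrt pi * (if 0 \<le> x then integral {0..x} (\<lambda>z. exp (z\<^sup>2))
                                       else - integral {x..0} (\<lambda>z. exp (z\<^sup>2)))"

definition f :: "real \<Rightarrow> real \<Rightarrow> real" where
  "f t a = t * integral {0<..1} (\<lambda>x. exp (- t * x * ln (a * x)))"

end

theory Submission
  imports Defs "HOL-Real_Asymp.Real_Asymp"
begin

(* For s = -t > 0 the substitution x = 1 - v gives f(-s, a) = -a^s J(s), where
   J(s) = f_laplace a s = s * int_0^1 exp(s phi(v)) dv and phi(v) = (1 - v) ln(a (1 - v)) - ln a.
   The phase phi vanishes at the endpoint v = 0 with slope -(1 + ln a) and stays below
   -(ln a) v, so Laplace's method at an endpoint gives J(s) --> 1 / (1 + ln a).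
   The substitution z = sqrt(s/2) (1 + ln a - v) turns the erfi expression into -a^s K(s),
   where K(s) = erfi_laplace (1 + ln a) s = s * int_0^(1 + ln a) exp(s (v^2/2 - (1 + ln a) v)) dv
   is a Laplace integral with the same endpoint slope and hence the same limit.  Finally
   a^s = exp(s ln a) and J(s) has a positive limit, so |f(-s, a)| eventually exceeds
   exp(s ln a / 2). *)

lemma integral_Icc_0_reflect_stretch:
  fixes g :: "real \<Rightarrow> real"
  assumes "k > 0"
  shows "integral {0..k * c} g = k * integral {0..c} (\<lambda>v. g (k * (c - v)))"
proof -
  have "(\<lambda>x. x / (-k)) ` {0..k * c} = {-c..0}"
  proof
    show "(\<lambda>x. x / (-k)) ` {0..k * c} \<subseteq> {-c..0}"
      using assms by (auto simp: field_simps)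
    show "{-c..0} \<subseteq> (\<lambda>x. x / (-k)) ` {0..k * c}"
    proof
      fix x assume "x \<in> {-c..0}"
      then show "x \<in> (\<lambda>x. x / (-k)) ` {0..k * c}"
        using assms mult_left_mono[of "-x" c k]
        by (intro image_eqI[of _ _ "-k * x"]) (auto simp: field_simps mult_nonneg_nonpos)
    qed
  qed
  then have "integral {-c..0} (\<lambda>x. g (-k * x)) = integral {0..k * c} g / k"
    using integral_stretch_real[of "-k" 0 "k * c" g] assms by simp
  moreover have "integral {0..c} (\<lambda>v. g (k * (c - v))) = integral {-c..0} (\<lambda>x. g (-k * x))"
    using integral_shift_real_ivl[of "-c" "-c" 0 "\<lambda>x. g (-k * x)"] by (simp add: algebra_simps)
  ultimately show ?thesis
    using assms by simp
qed

lemma has_integral_stretch_Icc_0: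
  fixes g :: "real \<Rightarrow> real"
  assumes "g integrable_on {0..B}" and "s > 0"
  shows "((\<lambda>u. if u \<in> {0..s * B} then g (u / s) else 0) has_integral s * integral {0..B} g) {0..}"
proof -
  have "(g has_integral integral {0..B} g) (cbox 0 B)"
    using assms(1) by (simp add: has_integral_integral)
  from has_integral_affinity'[OF this, of "1 / s" 0] assms(2)
  have "((\<lambda>u. g (u / s)) has_integral s * integral {0..B} g) {0..s * B}"
    by (simp add: field_simps)
  then show ?thesis
    by (subst has_integral_restrict) (use assms(2) in auto)
qed

lemma dominated_convergence_at_top:
  fixes F :: "real \<Rightarrow> 'n::euclidean_space \<Rightarrow> 'm::euclidean_space"
  assumes F: "\<forall>\<^sub>F s in at_top. F s integrable_on S \<and> (\<forall>x\<in>S. norm (F s x) \<le> h x)"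
    and h: "h integrable_on S"
    and lim: "\<And>x. x \<in> S \<Longrightarrow> ((\<lambda>s. F s x) \<longlongrightarrow> g x) at_top"
  shows "((\<lambda>s. integral S (F s)) \<longlongrightarrow> integral S g) at_top"
proof (rule tendsto_at_topI_sequentially)
  fix X :: "nat \<Rightarrow> real"
  assume X: "filterlim X at_top sequentially"
  obtain N where N: "\<And>n. n \<ge> N \<Longrightarrow> F (X n) integrable_on S \<and> (\<forall>x\<in>S. norm (F (X n) x) \<le> h x)"
    using filterlim_iff[THEN iffD1, OF X, rule_format, OF F] by (auto simp: eventually_sequentially)
  have "(\<lambda>k. integral S (F (X (k + N)))) \<longlonglongrightarrow> integral S g"
  proof (rule dominated_convergence(2)[OF _ h])
    show "F (X (k + N)) integrable_on S" for k
      using N[of "k + N"] by auto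
    show "norm (F (X (k + N)) x) \<le> h x" if "x \<in> S" for k x
      using N[of "k + N"] that by auto
    show "(\<lambda>k. F (X (k + N)) x) \<longlonglongrightarrow> g x" if "x \<in> S" for x
      using filterlim_compose[OF lim[OF that] X] by (rule LIMSEQ_ignore_initial_segment)
  qed
  then show "(\<lambda>n. integral S (F (X n))) \<longlonglongrightarrow> integral S g"
    by (rule LIMSEQ_offset)
qed

lemma laplace_endpoint_limit:
  fixes \<phi> :: "real \<Rightarrow> real" and \<alpha> c B :: real
  assumes "\<alpha> > 0" and "c > 0" and "B > 0"
    and integrable: "\<And>s. s > 0 \<Longrightarrow> (\<lambda>v. exp (s * \<phi> v)) integrable_on {0..B}"
    and upper: "\<And>v. v \<in> {0..B} \<Longrightarrow> \<phi> v \<le> - c * v"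
    and slope: "\<And>u. u \<ge> 0 \<Longrightarrow> ((\<lambda>s. s * \<phi> (u / s)) \<longlongrightarrow> - \<alpha> * u) at_top"
  shows "((\<lambda>s. s * integral {0..B} (\<lambda>v. exp (s * \<phi> v))) \<longlongrightarrow> 1 / \<alpha>) at_top"
proof -
  \<comment> \<open>After the substitution v = u/s the integrals live on [0, oo), are dominated by
    exp(-c u) and converge pointwise to exp(-alpha u), whose integral is 1/alpha.\<close>
  define G where "G s u = (if u \<in> {0..s * B} then exp (s * \<phi> (u / s)) else 0)" for s u
  have G_integral: "(G s has_integral s * integral {0..B} (\<lambda>v. exp (s * \<phi> v))) {0..}"
    if "s > 0" for s
    unfolding G_def using has_integral_stretch_Icc_0[OF integrable[OF that] that] by simp
  have G_le: "norm (G s u) \<le> exp (- c * u)" if "s > 0" "u \<ge> 0" for s u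
  proof (cases "u \<le> s * B")
    case True
    then have "s * \<phi> (u / s) \<le> s * (- c * (u / s))"
      using that upper[of "u / s"] by (intro mult_left_mono) (auto simp: field_simps)
    then show ?thesis
      using True that by (simp add: G_def)
  qed (simp add: G_def)
  have G_lim: "((\<lambda>s. G s u) \<longlongrightarrow> exp (- \<alpha> * u)) at_top" if "u \<in> {0..}" for u
  proof -
    have "\<forall>\<^sub>F s in at_top. exp (s * \<phi> (u / s)) = G s u"
      using eventually_ge_at_top[of "max 1 (u / B)"]
    proof eventually_elim
      case (elim s)
      then have "s > 0" and "u \<le> s * B"
        using \<open>B > 0\<close> by (auto simp: field_simps)
      then show ?case
        using that by (simp add: G_def)
    qed
    with slope[of u] that show ?thesis
      by (auto intro: Lim_transform_eventually tendsto_exp)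
  qed
  have "((\<lambda>s. integral {0..} (G s)) \<longlongrightarrow> integral {0..} (\<lambda>u. exp (- \<alpha> * u))) at_top"
  proof (rule dominated_convergence_at_top[OF _ _ G_lim])
    show "\<forall>\<^sub>F s in at_top. G s integrable_on {0..} \<and> (\<forall>u\<in>{0..}. norm (G s u) \<le> exp (- c * u))"
      using eventually_gt_at_top[of 0] by eventually_elim (use G_integral G_le in auto)
    show "(\<lambda>u. exp (- c * u)) integrable_on {0..}"
      using has_integral_exp_minus_to_infinity[OF \<open>c > 0\<close>, of 0] by blast
  qed
  moreover have "integral {0..} (\<lambda>u. exp (- \<alpha> * u)) = 1 / \<alpha>"
    using has_integral_exp_minus_to_infinity[OF \<open>\<alpha> > 0\<close>, of 0] by (simp add: integral_unique)
  moreover have "\<forall>\<^sub>F s in at_top. integral {0..} (G s) = s * integral {0..B} (\<lambda>v. exp (s * \<phi> v))"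
    using eventually_gt_at_top[of 0] by eventually_elim (use G_integral in \<open>simp add: integral_unique\<close>)
  ultimately show ?thesis
    by (auto intro: Lim_transform_eventually)
qed

lemma continuous_on_mult_ln_mult:
  fixes a :: real
  assumes "a > 0"
  shows "continuous_on {0..} (\<lambda>x. x * ln (a * x))"
  unfolding continuous_on_eq_continuous_within
proof
  fix x :: real assume "x \<in> {0..}"
  show "continuous (at x within {0..}) (\<lambda>x. x * ln (a * x))"
  proof (cases "x = 0")
    case True
    have "((\<lambda>x. x * (ln a + ln x)) \<longlongrightarrow> 0) (at_right 0)"
      by real_asymp
    moreover have "\<forall>\<^sub>F x in at_right 0. x * (ln a + ln x) = x * ln (a * x)"
      using eventually_at_right_less[of 0] by eventually_elim (use assms in \<open>simp add: ln_mult\<close>)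
    ultimately show ?thesis
      using True by (simp add: continuous_within at_within_Ici_at_right Lim_transform_eventually)
  next
    case False
    with \<open>x \<in> {0..}\<close> assms have "isCont (\<lambda>x. x * ln (a * x)) x"
      by (intro continuous_intros) auto
    then show ?thesis
      by (rule continuous_at_imp_continuous_at_within)
  qed
qed

lemma mult_ln_mult_le:
  fixes a x :: real
  assumes "a > 0" and "0 \<le> x" and "x \<le> 1"
  shows "x * ln (a * x) \<le> x * ln a"
proof (cases "x = 0")
  case False
  with assms have "ln (a * x) \<le> ln a"
    by (simp add: ln_mult)
  with assms show ?thesis
    by (simp add: mult_left_mono)
qed simp

lemma erfi_minus:
  assumes "y \<ge> 0"
  shows "erfi (- y) = - (2 / sqrt pi * integral {0..y} (\<lambda>z. exp (z\<^sup>2)))"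
proof -
  have "integral {-y..0} (\<lambda>z. exp (z\<^sup>2)) = integral {-y..-0} (\<lambda>z. exp ((-z)\<^sup>2))"
    by (simp only: minus_zero power2_minus)
  also have "\<dots> = integral {0..y} (\<lambda>z. exp (z\<^sup>2))"
    by (rule Henstock_Kurzweil_Integration.integral_reflect_real)
  finally show ?thesis
    using assms by (auto simp: erfi_def)
qed

definition f_laplace :: "real \<Rightarrow> real \<Rightarrow> real" where
  "f_laplace a s = s * integral {0..1} (\<lambda>v. exp (s * ((1 - v) * ln (a * (1 - v)) - ln a)))"

definition erfi_laplace :: "real \<Rightarrow> real \<Rightarrow> real" where
  "erfi_laplace c s = s * integral {0..c} (\<lambda>v. exp (s * (v\<^sup>2 / 2 - c * v)))"

lemma tendsto_f_laplace:
  fixes a :: real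
  assumes "a > 1"
  shows "(f_laplace a \<longlongrightarrow> 1 / (1 + ln a)) at_top"
  unfolding f_laplace_def[abs_def]
proof (rule laplace_endpoint_limit)
  have "ln a > 0"
    using assms by simp
  then show "1 + ln a > 0" "ln a > 0" "(1::real) > 0"
    by auto
  have "continuous_on {0..1} ((\<lambda>x. x * ln (a * x)) \<circ> (\<lambda>v. 1 - v))"
    using assms by (intro continuous_on_compose continuous_intros
        continuous_on_subset[OF continuous_on_mult_ln_mult]) auto
  then show "(\<lambda>v. exp (s * ((1 - v) * ln (a * (1 - v)) - ln a))) integrable_on {0..1}" for s
    by (intro integrable_continuous_interval continuous_on_exp continuous_on_mult_left
        continuous_on_diff continuous_on_const) (simp add: o_def)
  show "(1 - v) * ln (a * (1 - v)) - ln a \<le> - ln a * v" if "v \<in> {0..1}" for v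
    using that assms mult_ln_mult_le[of a "1 - v"] by (simp add: algebra_simps)
  show "((\<lambda>s. s * ((1 - u / s) * ln (a * (1 - u / s)) - ln a)) \<longlongrightarrow> - (1 + ln a) * u) at_top"
    if "u \<ge> 0" for u
  proof -
    have "((\<lambda>s. s * ((1 - u / s) * (ln a + ln (1 - u / s)) - ln a)) \<longlongrightarrow> - u - u * ln a) at_top"
      by real_asymp
    moreover have "\<forall>\<^sub>F s in at_top. s * ((1 - u / s) * (ln a + ln (1 - u / s)) - ln a)
        = s * ((1 - u / s) * ln (a * (1 - u / s)) - ln a)"
      using eventually_gt_at_top[of u]
    proof eventually_elim
      case (elim s)
      then have "1 - u / s > 0"
        using that by (simp add: field_simps)
      then show ?case
        using assms by (simp add: ln_mult)
    qed
    ultimately show ?thesis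
      by (simp add: Lim_transform_eventually algebra_simps)
  qed
qed

lemma tendsto_erfi_laplace:
  assumes "c > 0"
  shows "(erfi_laplace c \<longlongrightarrow> 1 / c) at_top"
  unfolding erfi_laplace_def[abs_def]
proof (rule laplace_endpoint_limit)
  show "(\<lambda>v. exp (s * (v\<^sup>2 / 2 - c * v))) integrable_on {0..c}" for s
    by (intro integrable_continuous_interval continuous_intros) auto
  show "v\<^sup>2 / 2 - c * v \<le> - (c / 2) * v" if "v \<in> {0..c}" for v
    using that mult_right_mono[of v c v] by (simp add: power2_eq_square field_simps)
  show "((\<lambda>s. s * ((u / s)\<^sup>2 / 2 - c * (u / s))) \<longlongrightarrow> - c * u) at_top" for u
  proof -
    have "((\<lambda>s. u\<^sup>2 / 2 / s - c * u) \<longlongrightarrow> 0 - c * u) at_top"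
      by (intro tendsto_intros real_tendsto_divide_at_top[OF tendsto_const] filterlim_ident)
    moreover have "\<forall>\<^sub>F s in at_top. u\<^sup>2 / 2 / s - c * u = s * ((u / s)\<^sup>2 / 2 - c * (u / s))"
      using eventually_gt_at_top[of 0] by eventually_elim (simp add: field_simps power2_eq_square)
    ultimately show ?thesis
      by (simp add: Lim_transform_eventually)
  qed
qed (use assms in auto)

lemma f_eq_f_laplace:
  fixes a t :: real
  assumes "a > 0"
  shows "f t a = - (a powr (- t) * f_laplace a (- t))"
proof -
  have split_exp: "exp (- t * (1 - v) * ln (a * (1 - v)))
      = a powr (- t) * exp (- t * ((1 - v) * ln (a * (1 - v)) - ln a))" for v
    using assms by (simp add: powr_def exp_add[symmetric] algebra_simps)
  have "integral {0<..1} (\<lambda>x. exp (- t * x * ln (a * x)))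
      = integral {0..1} (\<lambda>x. exp (- t * x * ln (a * x)))"
    by (rule integral_subset_negligible) auto
  also have "\<dots> = integral {0..1} (\<lambda>v. exp (- t * (1 - v) * ln (a * (1 - v))))"
    using integral_Icc_0_reflect_stretch[of 1 1 "\<lambda>x. exp (- t * x * ln (a * x))"]
    by (simp add: mult.assoc)
  also have "\<dots> = a powr (- t) * integral {0..1} (\<lambda>v. exp (- t * ((1 - v) * ln (a * (1 - v)) - ln a)))"
    by (simp only: split_exp integral_mult_right)
  finally show ?thesis
    by (simp add: f_def f_laplace_def)
qed

lemma erfi_eq_erfi_laplace:
  assumes "c \<ge> 0" and "t < 0"
  shows "sqrt (- pi * t / 2) * erfi (- c * sqrt (- t / 2)) * exp (t * c\<^sup>2 / 2) = - erfi_laplace c (- t)"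
proof -
  define s where "s = - t"
  define k where "k = sqrt (s / 2)"
  have "s > 0" "k > 0" "k\<^sup>2 = s / 2"
    using assms by (auto simp: s_def k_def)
  have square: "(k * (c - v))\<^sup>2 = s * c\<^sup>2 / 2 + s * (v\<^sup>2 / 2 - c * v)" for v
    unfolding power_mult_distrib \<open>k\<^sup>2 = s / 2\<close> by (simp add: power2_eq_square algebra_simps)
  define I where "I = integral {0..c} (\<lambda>v. exp (s * (v\<^sup>2 / 2 - c * v)))"
  have "integral {0..k * c} (\<lambda>z. exp (z\<^sup>2)) = k * integral {0..c} (\<lambda>v. exp ((k * (c - v))\<^sup>2))"
    using \<open>k > 0\<close> by (rule integral_Icc_0_reflect_stretch)
  also have "\<dots> = k * exp (s * c\<^sup>2 / 2) * I"
    by (simp add: I_def square exp_add)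
  finally have "sqrt (- pi * t / 2) * erfi (- c * sqrt (- t / 2)) * exp (t * c\<^sup>2 / 2)
      = sqrt pi * k * (- (2 / sqrt pi * (k * exp (s * c\<^sup>2 / 2) * I))) * exp (- s * c\<^sup>2 / 2)"
    using erfi_minus[of "k * c"] assms \<open>k > 0\<close>
    by (simp add: s_def k_def real_sqrt_mult[symmetric] mult.commute)
  also have "\<dots> = - (2 * k\<^sup>2 * I) * (exp (s * c\<^sup>2 / 2) * exp (- s * c\<^sup>2 / 2))"
    by (simp add: power2_eq_square)
  also have "\<dots> = - erfi_laplace c (- t)"
    by (simp add: \<open>k\<^sup>2 = s / 2\<close> s_def I_def erfi_laplace_def exp_add[symmetric])
  finally show ?thesis .
qed

lemma exp_le_abs_f:
  fixes a :: real
  assumes "a > 1"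
  shows "\<forall>\<^sub>F t in at_bot. exp (- (ln a / 2) * t) \<le> \<bar>f t a\<bar>"
proof -
  have "ln a > 0"
    using assms by simp
  then have exp_lim: "filterlim (\<lambda>t. exp (- (ln a / 2) * t)) at_top at_bot"
    by real_asymp
  have laplace_lim: "((\<lambda>t. f_laplace a (- t)) \<longlongrightarrow> 1 / (1 + ln a)) at_bot"
    using tendsto_f_laplace[OF assms] filterlim_uminus_at_top_at_bot by (rule filterlim_compose)
  have "filterlim (\<lambda>t. f_laplace a (- t) * exp (- (ln a / 2) * t)) at_top at_bot"
    using \<open>ln a > 0\<close> by (intro filterlim_tendsto_pos_mult_at_top[OF laplace_lim _ exp_lim]) auto
  then have "\<forall>\<^sub>F t in at_bot. f_laplace a (- t) * exp (- (ln a / 2) * t) \<ge> 1"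
    by (simp add: filterlim_at_top)
  then show ?thesis
  proof eventually_elim
    case (elim t)
    then have "0 < f_laplace a (- t) * exp (- (ln a / 2) * t)"
      by linarith
    then have "0 \<le> f_laplace a (- t)"
      by (simp add: zero_less_mult_iff)
    have "exp (- (ln a / 2) * t) \<le> exp (- (ln a / 2) * t) * (f_laplace a (- t) * exp (- (ln a / 2) * t))"
      using elim by simp
    also have "\<dots> = a powr (- t) * f_laplace a (- t)"
      using assms by (simp add: powr_def exp_add[symmetric])
    also have "\<dots> = \<bar>f t a\<bar>"
      using assms \<open>0 \<le> f_laplace a (- t)\<close> by (simp add: f_eq_f_laplace)
    finally show ?case .
  qed
qed

theorem mainTheorem6:
  fixes a :: real
  assumes "a > 1"
  shows "(\<lambda>t. f t a) \<sim>[at_bot]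
           (\<lambda>t. sqrt (- pi * t / 2) * a powr (- t)
                 * erfi (- (1 + ln a) * sqrt (- t / 2))
                 * exp (t * (1 + ln a)\<^sup>2 / 2))
         \<and> (\<exists>c>0. \<forall>\<^sub>F t in at_bot. \<bar>f t a\<bar> \<ge> exp (- c * t))"
proof -
  define c where "c = 1 + ln a"
  have "c > 0"
    using ln_gt_zero[OF assms] by (simp add: c_def)
  have "f_laplace a \<sim>[at_top] (\<lambda>_. 1 / c)" "erfi_laplace c \<sim>[at_top] (\<lambda>_. 1 / c)"
    using tendsto_f_laplace[OF assms] tendsto_erfi_laplace[OF \<open>c > 0\<close>] \<open>c > 0\<close>
    by (auto simp: c_def intro: tendsto_imp_asymp_equiv_const)
  then have laplace_equiv: "f_laplace a \<sim>[at_top] erfi_laplace c"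
    by (blast intro: asymp_equiv_trans asymp_equiv_symI)
  have "(\<lambda>t. f t a) \<sim>[at_bot] (\<lambda>t. - (a powr (- t) * f_laplace a (- t)))"
    using assms by (simp add: f_eq_f_laplace)
  also have "\<dots> \<sim>[at_bot] (\<lambda>t. - (a powr (- t) * erfi_laplace c (- t)))"
    by (intro asymp_equiv_intros asymp_equiv_compose'[OF laplace_equiv filterlim_uminus_at_top_at_bot])
  also have "\<dots> \<sim>[at_bot] (\<lambda>t. sqrt (- pi * t / 2) * a powr (- t)
      * erfi (- (1 + ln a) * sqrt (- t / 2)) * exp (t * (1 + ln a)\<^sup>2 / 2))"
    using eventually_gt_at_bot[of 0]
    by (intro asymp_equiv_refl_ev, eventually_elim)
      (use erfi_eq_erfi_laplace[OF less_imp_le[OF \<open>c > 0\<close>]] in \<open>simp add: c_def mult_ac\<close>)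
  finally show ?thesis
    using exp_le_abs_f[OF assms] assms by (auto intro: exI[of _ "ln a / 2"])
qed

end
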